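(* For every $N\ge2$, every unistochastic $N\times N$ matrix $B=V\odot\overline{V}$ ($V\in U(N)$) arises as the hyper-decoherence of some unistochastic channel: there exists $U\in U(N^2)$ with $B=\mathcal{D}_h(\Psi_U)$. That is, $\mathcal{U}_N^C\subseteq\mathcal{D}_h(\mathcal{U}_N^Q)$.
   Context: $\odot$ is the entrywise (Hadamard) product; $\mathcal{U}_N^C=\{V\odot\overline{V}:V\in U(N)\}$. For $U\in U(N^2)$ acting on $\mathbb{C}^N\otimes\mathbb{C}^N_E$, the unistochastic channel is $\Psi_U(\rho)=\mathrm{Tr}_E[U(\rho\otimes\mathbb{I}_N/N)U^\dagger]$, and $\mathcal{U}_N^Q=\{\Psi_U:U\in U(N^2)\}$. Hyper-decoherence of a channel $\Phi$ is the $N\times N$ matrix $\mathcal{D}_h(\Phi)_{ij}=\mathrm{Tr}[|i\rangle\langle i|\,\Phi(|j\rangle\langle j|)]$. *)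

theory Defs
  imports Complex_Main
begin

text \<open>Square complex matrices represented as functions nat => nat => complex;
  only entries with indices below the stated dimension are meaningful.
  The composite space C^N (x) C^N_E is indexed by a*N + e (a system, e environment).\<close>

type_synonym cmat = "nat \<Rightarrow> nat \<Rightarrow> complex"

definition mmult :: "nat \<Rightarrow> cmat \<Rightarrow> cmat \<Rightarrow> cmat" where
  "mmult n A B = (\<lambda>i j. \<Sum>k<n. A i k * B k j)"

definition adj :: "cmat \<Rightarrow> cmat" where
  "adj A = (\<lambda>i j. cnj (A j i))"

definition idm :: cmat where
  "idm = (\<lambda>i j. if i = j then 1 else 0)"

definition unitary_mat :: "nat \<Rightarrow> cmat \<Rightarrow> bool" where
  "unitary_mat n U \<longleftrightarrow>
     (\<forall>i<n. \<forall>j<n. mmult n (adj U) U i j = idm i j \<and> mmult n U (adj U) i j = idm i j)"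

definition kron :: "nat \<Rightarrow> cmat \<Rightarrow> cmat \<Rightarrow> cmat" where
  "kron N A B = (\<lambda>i j. A (i div N) (j div N) * B (i mod N) (j mod N))"

definition ptrace_E :: "nat \<Rightarrow> cmat \<Rightarrow> cmat" where
  "ptrace_E N M = (\<lambda>a b. \<Sum>e<N. M (a * N + e) (b * N + e))"

definition mtrace :: "nat \<Rightarrow> cmat \<Rightarrow> complex" where
  "mtrace n M = (\<Sum>i<n. M i i)"

definition ketbra :: "nat \<Rightarrow> cmat" where
  "ketbra j = (\<lambda>a b. if a = j \<and> b = j then 1 else 0)"

definition unistochastic_channel :: "nat \<Rightarrow> cmat \<Rightarrow> cmat \<Rightarrow> cmat" where
  "unistochastic_channel N U \<rho> =
     ptrace_E N (mmult (N^2) (mmult (N^2) U (kron N \<rho> (\<lambda>i j. idm i j / of_nat N))) (adj U))"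

definition hyper_decoherence :: "nat \<Rightarrow> (cmat \<Rightarrow> cmat) \<Rightarrow> cmat" where
  "hyper_decoherence N \<Phi> = (\<lambda>i j. mtrace N (mmult N (ketbra i) (\<Phi> (ketbra j))))"

end

theory Submission
  imports Defs
begin

(* Take U = V \<otimes> I. Since U never touches the environment, tracing it out leaves the unitary
   channel \<rho> \<mapsto> V \<rho> V\<^sup>\<dagger>, and the diagonal of V |j><j| V\<^sup>\<dagger> = |v_j><v_j| is |V_ij|\<^sup>2. *)

lemma sum_lessThan_mult:
  fixes f :: "nat \<Rightarrow> 'a::comm_monoid_add"
  shows "(\<Sum>k<m * N. f k) = (\<Sum>a<m. \<Sum>e<N. f (a * N + e))"
  by (simp add: sum.nat_group[symmetric] sum.atLeastLessThan_shift_0 atLeast0LessThan comp_def add.commute)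

lemma mmult_kron:
  "mmult (N * N) (kron N A B) (kron N C D) = kron N (mmult N A C) (mmult N B D)"
proof (intro ext)
  fix i j
  have "mmult (N * N) (kron N A B) (kron N C D) i j =
      (\<Sum>a<N. \<Sum>e<N. A (i div N) a * C a (j div N) * (B (i mod N) e * D e (j mod N)))"
    unfolding mmult_def kron_def by (subst sum_lessThan_mult) (simp add: mult_ac)
  also have "\<dots> = kron N (mmult N A C) (mmult N B D) i j"
    by (simp add: kron_def mmult_def sum_product)
  finally show "mmult (N * N) (kron N A B) (kron N C D) i j = kron N (mmult N A C) (mmult N B D) i j" .
qed

lemma adj_kron: "adj (kron N A B) = kron N (adj A) (adj B)"
  by (simp add: adj_def kron_def fun_eq_iff)

lemma adj_idm: "adj idm = idm"
  by (simp add: adj_def idm_def fun_eq_iff)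

lemma kron_idm_idm: "kron N idm idm = idm"
  by (auto simp: kron_def idm_def fun_eq_iff) (metis div_mult_mod_eq)

lemma mmult_idm_left: "i < n \<Longrightarrow> mmult n idm A i j = A i j"
  by (simp add: mmult_def idm_def if_distrib if_distribR cong: if_cong)

lemma mmult_idm_right: "j < n \<Longrightarrow> mmult n A idm i j = A i j"
  by (simp add: mmult_def idm_def if_distrib if_distribR cong: if_cong)

lemma unitary_idm: "unitary_mat n idm"
  by (simp add: unitary_mat_def adj_idm mmult_idm_left)

lemma unitary_kron:
  assumes "unitary_mat N A" and "unitary_mat N B"
  shows "unitary_mat (N * N) (kron N A B)"
  unfolding unitary_mat_def
proof (intro allI impI conjI)
  fix i j assume "i < N * N" and "j < N * N"
  moreover from this have "N > 0"
    by (cases N) simp_all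
  ultimately have blocks: "i div N < N" "j div N < N" "i mod N < N" "j mod N < N"
    by (simp_all add: less_mult_imp_div_less)
  show "mmult (N * N) (adj (kron N A B)) (kron N A B) i j = idm i j"
    using assms blocks unfolding adj_kron mmult_kron unitary_mat_def
    by (subst kron_idm_idm[symmetric, of N]) (simp add: kron_def)
  show "mmult (N * N) (kron N A B) (adj (kron N A B)) i j = idm i j"
    using assms blocks unfolding adj_kron mmult_kron unitary_mat_def
    by (subst kron_idm_idm[symmetric, of N]) (simp add: kron_def)
qed

lemma ptrace_E_kron: "ptrace_E N (kron N A B) = (\<lambda>a b. A a b * mtrace N B)"
  by (simp add: ptrace_E_def kron_def mtrace_def sum_distrib_left fun_eq_iff)

lemma mtrace_idm_conj: "mtrace n (mmult n (mmult n idm M) idm) = mtrace n M"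
  by (simp add: mtrace_def mmult_idm_left mmult_idm_right)

lemma mtrace_maximally_mixed: "n > 0 \<Longrightarrow> mtrace n (\<lambda>i j. idm i j / of_nat n) = 1"
  by (simp add: mtrace_def idm_def)

lemma unistochastic_channel_kron_idm:
  assumes "N > 0"
  shows "unistochastic_channel N (kron N V idm) \<rho> = mmult N (mmult N V \<rho>) (adj V)"
  using assms
  by (simp add: unistochastic_channel_def power2_eq_square adj_kron adj_idm mmult_kron
      ptrace_E_kron mtrace_idm_conj mtrace_maximally_mixed)

lemma mmult_ketbra_left: "i < n \<Longrightarrow> mmult n (ketbra i) M a b = (if a = i then M i b else 0)"
  by (cases "a = i") (simp_all add: mmult_def ketbra_def if_distrib if_distribR cong: if_cong)

lemma mmult_ketbra_right: "j < n \<Longrightarrow> mmult n M (ketbra j) a b = (if b = j then M a j else 0)"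
  by (cases "b = j") (simp_all add: mmult_def ketbra_def if_distrib if_distribR cong: if_cong)

lemma mtrace_ketbra_mmult: "i < n \<Longrightarrow> mtrace n (mmult n (ketbra i) M) = M i i"
  by (simp add: mtrace_def mmult_ketbra_left)

lemma mmult_conj_ketbra:
  "j < n \<Longrightarrow> mmult n (mmult n V (ketbra j)) (adj V) a b = V a j * cnj (V b j)"
  by (simp add: mmult_def[of n "mmult n V (ketbra j)"] mmult_ketbra_right adj_def
      if_distrib if_distribR cong: if_cong)

lemma hyper_decoherence_unitary_conjugation:
  assumes "i < n" and "j < n"
  shows "hyper_decoherence n (\<lambda>\<rho>. mmult n (mmult n V \<rho>) (adj V)) i j = V i j * cnj (V i j)"
  using assms by (simp add: hyper_decoherence_def mtrace_ketbra_mmult mmult_conj_ketbra)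

theorem proposition9:
  fixes N :: nat and V :: cmat
  assumes "N \<ge> 2" and "unitary_mat N V"
  shows "\<exists>U. unitary_mat (N^2) U \<and>
           (\<forall>i<N. \<forall>j<N. hyper_decoherence N (unistochastic_channel N U) i j = V i j * cnj (V i j))"
proof (intro exI conjI allI impI)
  show "unitary_mat (N^2) (kron N V idm)"
    using unitary_kron[OF assms(2) unitary_idm] by (simp add: power2_eq_square)
  have "N > 0"
    using assms(1) by simp
  then have channel: "unistochastic_channel N (kron N V idm) = (\<lambda>\<rho>. mmult N (mmult N V \<rho>) (adj V))"
    by (simp add: unistochastic_channel_kron_idm fun_eq_iff)
  fix i j assume "i < N" and "j < N"
  then show "hyper_decoherence N (unistochastic_channel N (kron N V idm)) i j = V i j * cnj (V i j)"
    by (simp add: channel hyper_decoherence_unitary_conjugation)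
qed

end
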